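(* Let $r,s>0$ and let $F:U\subseteq\mathcal G(r,s)\to\mathcal G(r',s')$ be a holomorphic map, where $U$ is an open set containing a null point. If $F$ maps null points to null points, then there exists an open set $U'\subseteq U$ such that $F|_{U'}:U'\to\mathcal G(r',s')$ is an orthogonal map.
   Context: For $r\le s$, $\mathbb C^{r,s}$ denotes $\mathbb C^{r+s}$ with the indefinite Hermitian form $\langle z,w\rangle_{r,s}=\sum_{i=1}^r z_i\bar w_i-\sum_{i=r+1}^{r+s}z_i\bar w_i$. $\mathcal G(r,s)$ denotes the Grassmannian $G(r,r+s)$; for $p\in\mathcal G(r,s)$, $V_p$ is the corresponding $r$-dimensional subspace and $A_p$ an $r\times(r+s)$ matrix whose rows span $V_p$. With $I_{r,s}=\mathrm{diag}(I_r,-I_s)$, $p\perp q$ means $A_pI_{r,s}A_q^H=0$, and $p$ is null if $A_pI_{r,s}A_p^H=0$. A holomorphic map $F:U'\to\mathcal G(r',s')$, with $U'\subseteq\mathcal G(r,s)$ a connected open set containing a null point, is (local) orthogonal if $F(p)\perp F(q)$ for all $p,q\in U'$ with $p\perp q$. *)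

theory Defs
  imports "HOL-Analysis.Analysis"
begin

text \<open>Matrices with complex entries: an r x (r+s) matrix is an element of
  complex^('r+'s)^'r, with CARD('r) = r and CARD('s) = s; the columns indexed by
  Inl are the positive ones, those indexed by Inr the negative ones of the form
  of signature (r,s).\<close>

definition cmat_scale :: "complex \<Rightarrow> complex^'n^'m \<Rightarrow> complex^'n^'m" where
  "cmat_scale c v = (\<chi> i j. c * v$i$j)"

definition mat_holomorphic_on ::
  "(complex^'n^'m \<Rightarrow> complex^'b^'a) \<Rightarrow> (complex^'n^'m) set \<Rightarrow> bool" where
  "mat_holomorphic_on f W \<longleftrightarrow> open W \<and>
     (\<forall>x\<in>W. \<exists>L. (f has_derivative L) (at x) \<and>
        (\<forall>v. L (cmat_scale \<i> v) = cmat_scale \<i> (L v)))"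

definition full_rank :: "complex^'c^'r \<Rightarrow> bool" where
  "full_rank A \<longleftrightarrow> (\<forall>c. transpose A *v c = 0 \<longrightarrow> c = 0)"

definition rowsp :: "complex^'c^'r \<Rightarrow> (complex^'c) set" where
  "rowsp A = range (\<lambda>c. transpose A *v c)"

definition Grass :: "(complex^('r::finite + 's::finite)) set set" where
  "Grass = {rowsp (A :: complex^('r+'s)^'r) | A. full_rank A}"

definition reps :: "(complex^('r::finite + 's::finite)) set set \<Rightarrow> (complex^('r+'s)^'r) set" where
  "reps U = {A. full_rank A \<and> rowsp A \<in> U}"

definition grass_top :: "(complex^('r::finite + 's::finite)) set topology" where
  "grass_top = topology (\<lambda>U. U \<subseteq> (Grass :: (complex^('r+'s)) set set) \<and>
                               open (reps U :: (complex^('r+'s)^'r) set))"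

definition Isig :: "complex^('r::finite + 's::finite)^('r+'s)" where
  "Isig = (\<chi> i j. if i = j then (case i of Inl _ \<Rightarrow> 1 | Inr _ \<Rightarrow> -1) else 0)"

definition ctrans :: "complex^'n^'m \<Rightarrow> complex^'m^'n" where
  "ctrans B = (\<chi> i j. cnj (B$j$i))"

definition gperp :: "(complex^('r::finite + 's::finite)) set \<Rightarrow> (complex^('r+'s)) set \<Rightarrow> bool" where
  "gperp p q \<longleftrightarrow> (\<exists>(A :: complex^('r+'s)^'r) (B :: complex^('r+'s)^'r).
      full_rank A \<and> rowsp A = p \<and> full_rank B \<and> rowsp B = q \<and>
      A ** Isig ** ctrans B = 0)"

definition gnull :: "(complex^('r::finite + 's::finite)) set \<Rightarrow> bool" where
  "gnull p \<longleftrightarrow> gperp p p"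

definition grass_holomorphic ::
  "((complex^('r::finite + 's::finite)) set \<Rightarrow> (complex^('r2::finite + 's2::finite)) set)
    \<Rightarrow> (complex^('r+'s)) set set \<Rightarrow> bool" where
  "grass_holomorphic F U \<longleftrightarrow>
     openin grass_top U \<and>
     (\<forall>p\<in>U. F p \<in> (Grass :: (complex^('r2+'s2)) set set)) \<and>
     (\<forall>A \<in> (reps U :: (complex^('r+'s)^'r) set).
        \<exists>W (\<Phi> :: complex^('r+'s)^'r \<Rightarrow> complex^('r2+'s2)^'r2).
          A \<in> W \<and> W \<subseteq> reps U \<and> mat_holomorphic_on \<Phi> W \<and>
          (\<forall>B\<in>W. full_rank (\<Phi> B) \<and> rowsp (\<Phi> B) = F (rowsp B)))"

definition orthogonal_map ::
  "((complex^('r::finite + 's::finite)) set \<Rightarrow> (complex^('r2::finite + 's2::finite)) set)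
    \<Rightarrow> (complex^('r+'s)) set set \<Rightarrow> bool" where
  "orthogonal_map F U' \<longleftrightarrow>
     grass_holomorphic F U' \<and> connectedin grass_top U' \<and> (\<exists>p\<in>U'. gnull p) \<and>
     (\<forall>p\<in>U'. \<forall>q\<in>U'. gperp p q \<longrightarrow> gperp (F p) (F q))"

end

theory Submission
  imports Defs "HOL-Complex_Analysis.Conformal_Mappings"
begin

text \<open>Write \<open>\<langle>X, Y\<rangle>\<close> for \<open>hprod X Y = X I\<^sub>r\<^sub>,\<^sub>s Y\<^sup>H\<close>. Fix a null representative \<open>A\<^sub>0\<close> and a null \<open>B\<^sub>0\<close>
  with \<open>\<langle>A\<^sub>0, B\<^sub>0\<rangle> = I\<close>; near \<open>A\<^sub>0\<close> every representative \<open>A\<close> can be normalised to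
  \<open>\<langle>A, B\<^sub>0\<rangle> = I\<close>. Two normalised perpendicular representatives \<open>A\<close>, \<open>B\<close> are joined by
  the quadratic curve \<open>N(\<tau>) = (A + B)/2 + \<tau> D - (1 + \<tau>\<^sup>2)/2 \<langle>D, D\<rangle> B\<^sub>0\<close>, \<open>D = -\<i>(A - B)/2\<close>,
  which passes through \<open>A\<close> at \<open>\<tau> = \<i>\<close> and through \<open>B\<close> at \<open>\<tau> = -\<i>\<close>, and is null for real \<open>\<tau>\<close>.
  For a holomorphic lift \<open>\<Phi>\<close> of \<open>F\<close> the function \<open>\<tau> \<mapsto> \<langle>\<Phi>(N \<tau>), \<Phi>(N (cnj \<tau>))\<rangle>\<close> is
  holomorphic and vanishes on the real axis because \<open>F\<close> preserves null points, so by the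
  identity theorem it vanishes at \<open>\<tau> = \<i>\<close>: \<open>\<langle>\<Phi> A, \<Phi> B\<rangle> = 0\<close>. The neighbourhood of \<open>A\<^sub>0\<close> is
  chosen by compactness so small that all these curves for \<open>|\<tau>| \<le> 2\<close> stay in the domain of \<open>\<Phi>\<close>.\<close>

section \<open>Matrix algebra of the indefinite Hermitian form\<close>

lemma cmat_scale_nth [simp]: "cmat_scale c A $ i $ j = c * A $ i $ j"
  by (simp add: cmat_scale_def)

lemma ctrans_nth [simp]: "ctrans A $ i $ j = cnj (A $ j $ i)"
  by (simp add: ctrans_def)

lemma ctrans_ctrans [simp]: "ctrans (ctrans A) = A"
  by (simp add: vec_eq_iff)

lemma ctrans_add [simp]: "ctrans (A + B) = ctrans A + ctrans B"
  by (simp add: vec_eq_iff)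

lemma ctrans_diff [simp]: "ctrans (A - B) = ctrans A - ctrans B"
  by (simp add: vec_eq_iff)

lemma ctrans_uminus [simp]: "ctrans (- A) = - ctrans A"
  by (simp add: vec_eq_iff)

lemma ctrans_zero [simp]: "ctrans 0 = 0"
  by (simp add: vec_eq_iff)

lemma ctrans_cmat_scale [simp]: "ctrans (cmat_scale c A) = cmat_scale (cnj c) (ctrans A)"
  by (simp add: vec_eq_iff)

lemma ctrans_mat1 [simp]: "ctrans (mat 1 :: complex^'n^'n) = mat 1"
  by (simp add: vec_eq_iff mat_def)

lemma ctrans_matrix_mult: "ctrans (A ** B) = ctrans B ** ctrans (A :: complex^'n^'m)"
  by (simp add: vec_eq_iff matrix_matrix_mult_def mult.commute)

lemma cmat_scale_1 [simp]: "cmat_scale 1 A = A"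
  by (simp add: vec_eq_iff)

lemma cmat_scale_zero [simp]: "cmat_scale c 0 = 0"
  by (simp add: vec_eq_iff)

lemma cmat_scale_add [simp]: "cmat_scale c (A + B) = cmat_scale c A + cmat_scale c B"
  by (simp add: vec_eq_iff algebra_simps)

lemma cmat_scale_cmat_scale [simp]: "cmat_scale c (cmat_scale d A) = cmat_scale (c * d) A"
  by (simp add: vec_eq_iff)

lemma cmat_scale_matrix_mult_left [simp]: "cmat_scale c A ** B = cmat_scale c (A ** B)"
  by (simp add: vec_eq_iff matrix_matrix_mult_def sum_distrib_left mult.assoc)

lemma cmat_scale_matrix_mult_right [simp]: "A ** cmat_scale c B = cmat_scale c (A ** B)"
  by (simp add: vec_eq_iff matrix_matrix_mult_def sum_distrib_left mult.left_commute)

lemma numeral_times_cmat [simp]: "(numeral n :: complex^'n^'m) * A = cmat_scale (numeral n) A"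
  by (simp add: vec_eq_iff)

lemma matrix_add_rdistrib: "(A + B) ** C = A ** C + B ** (C::complex^'p^'n)"
  by (simp add: vec_eq_iff matrix_matrix_mult_def sum.distrib distrib_right)

lemma matrix_diff_ldistrib: "C ** (A - B) = C ** A - C ** (B::complex^'p^'n)"
  by (simp add: vec_eq_iff matrix_matrix_mult_def sum_subtractf right_diff_distrib)

lemma matrix_diff_rdistrib: "(A - B) ** C = A ** C - B ** (C::complex^'p^'n)"
  by (simp add: vec_eq_iff matrix_matrix_mult_def sum_subtractf left_diff_distrib)

lemma matrix_uminus_left [simp]: "(- A) ** B = - (A ** (B::complex^'p^'n))"
  by (simp add: vec_eq_iff matrix_matrix_mult_def sum_negf)

lemma matrix_uminus_right [simp]: "A ** (- B) = - (A ** (B::complex^'p^'n))"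
  by (simp add: vec_eq_iff matrix_matrix_mult_def sum_negf)

lemma ctrans_Isig [simp]: "ctrans (Isig :: complex^('r::finite+'s::finite)^('r+'s)) = Isig"
  by (auto simp add: vec_eq_iff Isig_def split: sum.splits)

lemma Isig_mult_Isig [simp]: "(Isig :: complex^('r::finite+'s::finite)^('r+'s)) ** Isig = mat 1"
proof -
  have "(\<Sum>k\<in>UNIV. (Isig :: complex^('r+'s)^('r+'s)) $ i $ k * Isig $ k $ j) = Isig $ i $ i * Isig $ i $ j"
    for i j
    by (subst sum.remove[of _ i]) (auto simp: Isig_def intro!: sum.neutral)
  then show ?thesis
    by (auto simp: vec_eq_iff matrix_matrix_mult_def Isig_def mat_def split: sum.splits)
qed

definition hprod :: "complex^('r::finite+'s::finite)^'a \<Rightarrow> complex^('r+'s)^'b \<Rightarrow> complex^'b^'a" where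
  "hprod A B = A ** Isig ** ctrans B"

lemma hprod_add_left [simp]: "hprod (A + A') B = hprod A B + hprod A' B"
  by (simp add: hprod_def matrix_add_rdistrib)

lemma hprod_add_right [simp]: "hprod A (B + B') = hprod A B + hprod A B'"
  by (simp add: hprod_def matrix_add_ldistrib)

lemma hprod_diff_left [simp]: "hprod (A - A') B = hprod A B - hprod A' B"
  by (simp add: hprod_def matrix_diff_rdistrib)

lemma hprod_diff_right [simp]: "hprod A (B - B') = hprod A B - hprod A B'"
  by (simp add: hprod_def matrix_diff_ldistrib)

lemma hprod_uminus_left [simp]: "hprod (- A) B = - hprod A B"
  by (simp add: hprod_def)

lemma hprod_uminus_right [simp]: "hprod A (- B) = - hprod A B"
  by (simp add: hprod_def)

lemma hprod_zero_left [simp]: "hprod 0 B = 0"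
  by (simp add: hprod_def)

lemma hprod_zero_right [simp]: "hprod A 0 = 0"
  by (simp add: hprod_def)

lemma hprod_scale_left [simp]: "hprod (cmat_scale c A) B = cmat_scale c (hprod A B)"
  by (simp add: hprod_def)

lemma hprod_scale_right [simp]: "hprod A (cmat_scale c B) = cmat_scale (cnj c) (hprod A B)"
  by (simp add: hprod_def)

lemma hprod_mult_left [simp]: "hprod (M ** A) B = M ** hprod A B"
  by (simp add: hprod_def matrix_mul_assoc)

lemma hprod_mult_right [simp]: "hprod A (M ** B) = hprod A B ** ctrans M"
  by (simp add: hprod_def matrix_mul_assoc ctrans_matrix_mult)

lemma ctrans_hprod: "ctrans (hprod A B) = hprod B A"
  by (simp add: hprod_def ctrans_matrix_mult matrix_mul_assoc)

lemma hprod_nth: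
  "hprod X Y $ a $ b = (\<Sum>l\<in>UNIV. (\<Sum>k\<in>UNIV. X $ a $ k * Isig $ k $ l) * cnj (Y $ b $ l))"
  by (simp add: hprod_def matrix_matrix_mult_def)

section \<open>Row spaces, full rank and perpendicularity\<close>

lemma row_in_rowsp: "A $ i \<in> rowsp A"
proof -
  have "transpose A *v axis i 1 = A $ i"
    by (simp add: vec_eq_iff matrix_vector_mult_def transpose_def axis_def if_distrib cong: if_cong)
  then show ?thesis
    unfolding rowsp_def by (metis rangeI)
qed

lemma rowsp_subset_imp_factor:
  assumes "rowsp (A::complex^'c^'r) \<subseteq> rowsp (A'::complex^'c^'q)"
  obtains G where "A = G ** A'"
proof -
  have "\<forall>i. \<exists>c. A $ i = transpose A' *v c"
    using assms row_in_rowsp unfolding rowsp_def by blast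
  then obtain c where c: "\<And>i. A $ i = transpose A' *v c i"
    by metis
  have "A = (\<chi> i. c i) ** A'"
    by (simp add: vec_eq_iff c matrix_vector_mult_def matrix_matrix_mult_def transpose_def mult.commute)
  then show ?thesis
    using that by blast
qed

lemma rowsp_matrix_mult_subset: "rowsp (G ** A) \<subseteq> rowsp A"
  unfolding rowsp_def by (auto simp: matrix_transpose_mul matrix_vector_mul_assoc[symmetric])

lemma full_rank_cancel:
  assumes "full_rank (A::complex^'c^'r)" "M ** A = 0"
  shows "M = 0"
proof -
  have "transpose A *v (M $ k) = (M ** A) $ k" for k
    by (simp add: vec_eq_iff matrix_vector_mult_def matrix_matrix_mult_def transpose_def mult.commute)
  then show ?thesis
    using assms unfolding full_rank_def by (simp add: vec_eq_iff)
qed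

lemma full_rank_right_inverse:
  assumes "full_rank (A::complex^'c^'r)"
  obtains R where "A ** R = mat 1"
proof -
  have "\<exists>B. B ** transpose A = mat 1"
    using assms unfolding full_rank_def matrix_left_invertible_ker by blast
  then show ?thesis
    using that left_invertible_transpose by (metis transpose_transpose)
qed

lemma full_rank_matrix_mult:
  assumes "full_rank (A::complex^'c^'r)" "G ** H = mat 1"
  shows "full_rank (G ** A)"
  unfolding full_rank_def
proof (intro allI impI)
  fix c
  assume "transpose (G ** A) *v c = 0"
  then have "transpose A *v (transpose G *v c) = 0"
    by (simp only: matrix_vector_mul_assoc matrix_transpose_mul)
  then have "transpose G *v c = 0"
    using assms(1) unfolding full_rank_def by blast
  moreover have "transpose H *v (transpose G *v c) = transpose (G ** H) *v c"
    by (simp only: matrix_vector_mul_assoc matrix_transpose_mul)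
  ultimately show "c = 0"
    using assms(2) by (simp add: transpose_mat)
qed

lemma gperp_imp_hprod_zero:
  fixes A B :: "complex^('r::finite+'s::finite)^'r"
  assumes "gperp (rowsp A) (rowsp B)"
  shows "hprod A B = 0"
proof -
  obtain A' B' :: "complex^('r+'s)^'r"
    where "rowsp A' = rowsp A" "rowsp B' = rowsp B" "hprod A' B' = 0"
    using assms unfolding gperp_def hprod_def by blast
  moreover obtain G H where "A = G ** A'" "B = H ** B'"
    using rowsp_subset_imp_factor calculation(1,2) by (metis order_refl)
  ultimately show ?thesis
    by simp
qed

lemma gperp_rowsp_iff:
  fixes A B :: "complex^('r::finite+'s::finite)^'r"
  assumes "full_rank A" "full_rank B"
  shows "gperp (rowsp A) (rowsp B) \<longleftrightarrow> hprod A B = 0"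
  using assms gperp_imp_hprod_zero unfolding gperp_def hprod_def by blast

lemma gnull_rowsp_iff:
  fixes A :: "complex^('r::finite+'s::finite)^'r"
  assumes "full_rank A"
  shows "gnull (rowsp A) \<longleftrightarrow> hprod A A = 0"
  unfolding gnull_def using gperp_rowsp_iff[OF assms assms] .

lemma null_dual_exists:
  fixes A0 :: "complex^('r::finite+'s::finite)^'r"
  assumes "full_rank A0" "hprod A0 A0 = 0"
  obtains B0 where "hprod A0 B0 = mat 1" "hprod B0 B0 = 0"
proof -
  obtain R where R: "A0 ** R = mat 1"
    using full_rank_right_inverse[OF assms(1)] by blast
  define B1 where "B1 = ctrans (Isig ** R)"
  have B1: "hprod A0 B1 = mat 1"
    by (simp add: hprod_def B1_def ctrans_matrix_mult matrix_mul_assoc[symmetric] R)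
       (simp add: matrix_mul_assoc R)
  then have B1': "hprod B1 A0 = mat 1"
    by (metis ctrans_hprod ctrans_mat1)
  have "ctrans (hprod B1 B1) = hprod B1 B1"
    by (simp add: ctrans_hprod)
  \<comment> \<open>subtracting half the self-pairing of \<open>B\<^sub>1\<close> along the null \<open>A\<^sub>0\<close> makes it null\<close>
  then have "hprod (B1 - cmat_scale (1/2) (hprod B1 B1 ** A0)) (B1 - cmat_scale (1/2) (hprod B1 B1 ** A0)) = 0"
    by (simp add: B1 B1' assms(2) matrix_diff_ldistrib matrix_diff_rdistrib)
  moreover have "hprod A0 (B1 - cmat_scale (1/2) (hprod B1 B1 ** A0)) = mat 1"
    by (simp add: B1 assms(2))
  ultimately show ?thesis
    using that by blast
qed

section \<open>Normalised representatives and the null curve\<close>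

text \<open>The inverse is taken from Cramer's rule rather than \<^const>\<open>matrix_inv\<close> because this
  form is visibly continuous on the matrices with non-zero determinant.\<close>

definition cramer_inv :: "complex^'n^'n \<Rightarrow> complex^'n^'n" where
  "cramer_inv X = (\<chi> k j. det (\<chi> i l. if l = k then axis j 1 $ i else X $ i $ l) / det X)"

lemma matrix_mult_cramer_inv:
  assumes "det X \<noteq> 0"
  shows "X ** cramer_inv X = mat 1"
proof -
  have "(X ** cramer_inv X) $ i $ j = (X *v (\<chi> k. cramer_inv X $ k $ j)) $ i" for i j
    by (simp add: matrix_matrix_mult_def matrix_vector_mult_def)
  moreover have "X *v (\<chi> k. cramer_inv X $ k $ j) = axis j 1" for j
    by (subst cramer[OF assms]) (simp add: cramer_inv_def)
  ultimately show ?thesis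
    by (simp add: vec_eq_iff axis_def mat_def)
qed

lemma cramer_inv_matrix_mult:
  assumes "det X \<noteq> 0"
  shows "cramer_inv X ** X = mat 1"
  using matrix_mult_cramer_inv[OF assms] matrix_left_right_inverse by blast

lemma cramer_inv_mat1 [simp]: "cramer_inv (mat 1 :: complex^'n^'n) = mat 1"
  using matrix_mult_cramer_inv[of "mat 1 :: complex^'n^'n"] by simp

definition normalize_rep ::
  "complex^('r::finite+'s::finite)^'a \<Rightarrow> complex^('r+'s)^'a \<Rightarrow> complex^('r+'s)^'a" where
  "normalize_rep B0 A = cramer_inv (hprod A B0) ** A"

lemma hprod_normalize_rep:
  assumes "det (hprod A B0) \<noteq> 0"
  shows "hprod (normalize_rep B0 A) B0 = mat 1"
  using cramer_inv_matrix_mult[OF assms] by (simp add: normalize_rep_def)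

lemma rowsp_normalize_rep:
  assumes "det (hprod A B0) \<noteq> 0"
  shows "rowsp (normalize_rep B0 A) = rowsp A"
proof
  show "rowsp (normalize_rep B0 A) \<subseteq> rowsp A"
    unfolding normalize_rep_def by (rule rowsp_matrix_mult_subset)
  have "A = hprod A B0 ** normalize_rep B0 A"
    using matrix_mult_cramer_inv[OF assms] by (simp add: normalize_rep_def matrix_mul_assoc)
  then show "rowsp A \<subseteq> rowsp (normalize_rep B0 A)"
    by (metis rowsp_matrix_mult_subset)
qed

lemma normalize_rep_self:
  assumes "hprod A B0 = mat 1"
  shows "normalize_rep B0 A = A"
  by (simp add: normalize_rep_def assms)

definition null_curve :: "complex^('r::finite+'s::finite)^'a \<Rightarrow> complex^('r+'s)^'a \<Rightarrow>
    complex^('r+'s)^'a \<Rightarrow> complex \<Rightarrow> complex^('r+'s)^'a" where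
  "null_curve A B B0 \<tau> = (let D = cmat_scale (-\<i>/2) (A - B) in
      cmat_scale (1/2) (A + B) + cmat_scale \<tau> D + cmat_scale (-(1 + \<tau>\<^sup>2)/2) (hprod D D ** B0))"

lemma null_curve_at_i: "null_curve A B B0 \<i> = A"
  by (simp add: null_curve_def Let_def vec_eq_iff field_simps)

lemma null_curve_at_minus_i: "null_curve A B B0 (-\<i>) = B"
  by (simp add: null_curve_def Let_def vec_eq_iff field_simps)

lemma null_curve_same: "null_curve A A B0 \<tau> = A"
  by (simp add: null_curve_def Let_def vec_eq_iff field_simps)

lemma hprod_null_curve_real:
  assumes "hprod A B0 = mat 1" "hprod B B0 = mat 1" "hprod B0 B0 = 0" "hprod A B = 0"
  shows "hprod (null_curve A B B0 (of_real t)) (null_curve A B B0 (of_real t)) = 0"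
proof -
  have "hprod B0 A = mat 1" "hprod B0 B = mat 1" "hprod B A = 0"
    using assms by (metis ctrans_hprod ctrans_mat1 ctrans_zero)+
  moreover have "ctrans (hprod A A) = hprod A A" "ctrans (hprod B B) = hprod B B"
    by (simp_all add: ctrans_hprod)
  ultimately show ?thesis
    by (simp add: null_curve_def Let_def assms matrix_add_ldistrib matrix_add_rdistrib
        matrix_diff_ldistrib matrix_diff_rdistrib)
       (simp add: vec_eq_iff field_simps mat_def power2_eq_square)
qed

lemma bounded_linear_cmat_scale_const: "bounded_linear (\<lambda>z::complex. cmat_scale z (M::complex^'n^'m))"
proof -
  have "linear (\<lambda>z::complex. cmat_scale z M)"
    by (rule linearI) (simp_all add: vec_eq_iff algebra_simps)
  then show ?thesis
    using linear_conv_bounded_linear by blast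
qed

lemma null_curve_has_derivative:
  "\<exists>Q. (null_curve A B B0 has_derivative (\<lambda>h. cmat_scale h Q)) (at \<tau>)"
proof -
  define D where "D = cmat_scale (-\<i>/2) (A - B)"
  define K where "K = hprod D D ** B0"
  have curve: "null_curve A B B0 =
      (\<lambda>\<tau>. cmat_scale (1/2) (A + B) + cmat_scale \<tau> D + cmat_scale (-(1 + \<tau>\<^sup>2)/2) K)"
    by (simp add: fun_eq_iff null_curve_def Let_def D_def K_def)
  have "((\<lambda>\<tau>::complex. -(1 + \<tau>\<^sup>2)/2) has_field_derivative (-\<tau>)) (at \<tau>)"
    by (auto intro!: derivative_eq_intros)
  then have "((\<lambda>\<tau>::complex. -(1 + \<tau>\<^sup>2)/2) has_derivative (\<lambda>h. h * (-\<tau>))) (at \<tau>)"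
    unfolding has_field_derivative_def by (rule has_derivative_eq_rhs) (simp add: fun_eq_iff)
  then have "(null_curve A B B0 has_derivative
      (\<lambda>h. 0 + cmat_scale h D + cmat_scale (h * (-\<tau>)) K)) (at \<tau>)"
    unfolding curve
    by (intro has_derivative_add has_derivative_const bounded_linear_imp_has_derivative
        bounded_linear.has_derivative[OF bounded_linear_cmat_scale_const] bounded_linear_cmat_scale_const)
  moreover have "(\<lambda>h. 0 + cmat_scale h D + cmat_scale (h * (-\<tau>)) K) =
      (\<lambda>h. cmat_scale h (D + cmat_scale (-\<tau>) K))"
    by (simp add: fun_eq_iff vec_eq_iff algebra_simps)
  ultimately show ?thesis
    by (intro exI[of _ "D + cmat_scale (-\<tau>) K"]) simp
qed

section \<open>Holomorphic images of the null curve\<close>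

lemma cmat_scale_commute_of_i:
  assumes "bounded_linear L" "\<And>v. L (cmat_scale \<i> v) = cmat_scale \<i> (L v)"
  shows "L (cmat_scale z v) = cmat_scale z (L v)"
proof -
  interpret bounded_linear L
    by fact
  have decomp: "cmat_scale z X = Re z *\<^sub>R X + Im z *\<^sub>R cmat_scale \<i> X" for X :: "complex^'n^'m"
    by (simp add: vec_eq_iff complex_eq_iff)
  show ?thesis
    unfolding decomp by (simp only: add scale assms(2))
qed

lemma holomorphic_on_entry_comp:
  fixes \<Phi> :: "complex^'n^'m \<Rightarrow> complex^'b^'a" and N :: "complex \<Rightarrow> complex^'n^'m"
  assumes hol: "mat_holomorphic_on \<Phi> W"
    and N_in: "N ` S \<subseteq> W"
    and N_deriv: "\<And>\<tau>. \<exists>Q. (N has_derivative (\<lambda>h. cmat_scale h Q)) (at \<tau>)"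
  shows "(\<lambda>\<tau>. \<Phi> (N \<tau>) $ a $ b) holomorphic_on S"
  unfolding holomorphic_on_def
proof
  fix \<tau>
  assume "\<tau> \<in> S"
  then obtain L where L: "(\<Phi> has_derivative L) (at (N \<tau>))"
      "\<And>v. L (cmat_scale \<i> v) = cmat_scale \<i> (L v)"
    using hol N_in unfolding mat_holomorphic_on_def by blast
  obtain Q where Q: "(N has_derivative (\<lambda>h. cmat_scale h Q)) (at \<tau>)"
    using N_deriv by blast
  have "((\<lambda>\<tau>. \<Phi> (N \<tau>) $ a $ b) has_derivative (\<lambda>h. L (cmat_scale h Q) $ a $ b)) (at \<tau>)"
    using bounded_linear.has_derivative[OF bounded_linear_compose[OF bounded_linear_vec_nth
          bounded_linear_vec_nth] diff_chain_at[OF Q L(1)]]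
    by (simp add: comp_def)
  moreover have "(\<lambda>h. L (cmat_scale h Q) $ a $ b) = (*) (L Q $ a $ b)"
    using cmat_scale_commute_of_i[OF has_derivative_bounded_linear[OF L(1)] L(2)]
    by (simp add: fun_eq_iff mult.commute)
  ultimately have "((\<lambda>\<tau>. \<Phi> (N \<tau>) $ a $ b) has_field_derivative (L Q $ a $ b)) (at \<tau>)"
    by (simp add: has_field_derivative_def)
  then show "(\<lambda>\<tau>. \<Phi> (N \<tau>) $ a $ b) field_differentiable at \<tau> within S"
    using field_differentiable_at_within field_differentiable_def by blast
qed

lemma holomorphic_zero_on_reals_imp_zero:
  assumes hol: "f holomorphic_on ball 0 R"
    and real_zero: "\<And>t. \<bar>t\<bar> < R \<Longrightarrow> f (of_real t) = 0"
    and z: "z \<in> ball 0 R"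
  shows "f z = 0"
proof -
  define U where "U = complex_of_real ` {-R<..<R}"
  have "R > 0"
    using z norm_ge_zero[of z] by (simp del: norm_ge_zero)
  have "(0::complex) islimpt U"
    unfolding islimpt_approachable
  proof (intro allI impI)
    fix e :: real
    assume "0 < e"
    then have "complex_of_real (min (e/2) (R/2)) \<in> U - {0} \<and> dist (complex_of_real (min (e/2) (R/2))) 0 < e"
      using \<open>R > 0\<close> by (auto simp: dist_norm U_def)
    then show "\<exists>x'\<in>U. x' \<noteq> 0 \<and> dist x' 0 < e"
      by blast
  qed
  moreover have "U \<subseteq> ball 0 R"
    by (auto simp: U_def)
  moreover have "f w = 0" if "w \<in> U" for w
    using that real_zero by (auto simp: U_def)
  ultimately show ?thesis
    using analytic_continuation[OF hol open_ball connected_ball _ _ _ _ z, of U 0] \<open>R > 0\<close>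
    by simp
qed

lemma hprod_holomorphic_image_conj_zero:
  fixes \<Phi> :: "complex^('r::finite+'s::finite)^'a \<Rightarrow> complex^('r2::finite+'s2::finite)^'b"
    and N :: "complex \<Rightarrow> complex^('r+'s)^'a"
  assumes hol: "mat_holomorphic_on \<Phi> W"
    and N_in: "N ` ball 0 R \<subseteq> W"
    and N_deriv: "\<And>\<tau>. \<exists>Q. (N has_derivative (\<lambda>h. cmat_scale h Q)) (at \<tau>)"
    and real_null: "\<And>t. \<bar>t\<bar> < R \<Longrightarrow> hprod (\<Phi> (N (of_real t))) (\<Phi> (N (of_real t))) = 0"
    and z: "z \<in> ball 0 R"
  shows "hprod (\<Phi> (N z)) (\<Phi> (N (cnj z))) = 0"
proof -
  have "(\<lambda>\<tau>. hprod (\<Phi> (N \<tau>)) (\<Phi> (N (cnj \<tau>))) $ a $ b) holomorphic_on ball 0 R" for a b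
  proof -
    have "(\<lambda>\<tau>. \<Phi> (N \<tau>) $ b $ k) holomorphic_on cnj ` ball 0 R" for k
      using N_in by (intro holomorphic_on_entry_comp[OF hol _ N_deriv]) (auto simp: dist_norm)
    from holomorphic_on_compose_cnj_cnj[OF this open_ball]
    have "(\<lambda>\<tau>. cnj (\<Phi> (N (cnj \<tau>)) $ b $ k)) holomorphic_on ball 0 R" for k
      by (simp add: comp_def)
    moreover have "(\<lambda>\<tau>. \<Phi> (N \<tau>) $ a $ k) holomorphic_on ball 0 R" for k
      by (rule holomorphic_on_entry_comp[OF hol N_in N_deriv])
    ultimately show ?thesis
      unfolding hprod_nth by (intro holomorphic_on_sum holomorphic_on_mult holomorphic_on_const)
  qed
  moreover have "hprod (\<Phi> (N (of_real t))) (\<Phi> (N (cnj (of_real t)))) $ a $ b = 0"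
    if "\<bar>t\<bar> < R" for a b t
    using real_null[OF that] by simp
  ultimately have "hprod (\<Phi> (N z)) (\<Phi> (N (cnj z))) $ a $ b = 0" for a b
    by (rule holomorphic_zero_on_reals_imp_zero[OF _ _ z]) simp_all
  then show ?thesis
    by (simp add: vec_eq_iff)
qed

lemma hprod_holomorphic_image_zero:
  fixes \<Phi> :: "complex^('r::finite+'s::finite)^'a \<Rightarrow> complex^('r2::finite+'s2::finite)^'b"
  assumes hol: "mat_holomorphic_on \<Phi> W"
    and null_preserving: "\<And>X. X \<in> W \<Longrightarrow> hprod X X = 0 \<Longrightarrow> hprod (\<Phi> X) (\<Phi> X) = 0"
    and A: "hprod A B0 = mat 1" and B: "hprod B B0 = mat 1" and B0: "hprod B0 B0 = 0"
    and AB: "hprod A B = 0"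
    and curve_in: "null_curve A B B0 ` ball 0 2 \<subseteq> W"
  shows "hprod (\<Phi> A) (\<Phi> B) = 0"
proof -
  have "hprod (\<Phi> (null_curve A B B0 (of_real t))) (\<Phi> (null_curve A B B0 (of_real t))) = 0"
    if "\<bar>t\<bar> < 2" for t
    using that curve_in hprod_null_curve_real[OF A B B0 AB]
    by (intro null_preserving) (auto simp: dist_norm)
  from hprod_holomorphic_image_conj_zero[OF hol curve_in null_curve_has_derivative this, of \<i>]
  show ?thesis
    by (simp add: null_curve_at_i null_curve_at_minus_i)
qed

section \<open>Topology\<close>

lemma continuous_on_det [continuous_intros]:
  fixes f :: "'a::topological_space \<Rightarrow> complex^'n^'n"
  assumes "continuous_on S f"
  shows "continuous_on S (\<lambda>x. det (f x))"
  unfolding det_def by (intro continuous_intros assms)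

lemma continuous_on_matrix_mult [continuous_intros]:
  fixes f :: "'a::topological_space \<Rightarrow> complex^'n^'m" and g :: "'a \<Rightarrow> complex^'p^'n"
  assumes "continuous_on S f" "continuous_on S g"
  shows "continuous_on S (\<lambda>x. f x ** g x)"
  unfolding matrix_matrix_mult_def by (intro continuous_intros assms)

lemma continuous_on_cramer_inv [continuous_intros]:
  fixes f :: "'a::topological_space \<Rightarrow> complex^'n^'n"
  assumes "continuous_on S f" "\<And>x. x \<in> S \<Longrightarrow> det (f x) \<noteq> 0"
  shows "continuous_on S (\<lambda>x. cramer_inv (f x))"
proof -
  have entry: "continuous_on S (\<lambda>x. if l = k then c else f x $ i $ l)" for l k i and c :: complex
    by (cases "l = k") (auto intro!: continuous_intros assms(1))
  show ?thesis
    unfolding cramer_inv_def by (intro continuous_intros entry assms(1)) (use assms(2) in auto)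
qed

lemma continuous_on_ctrans [continuous_intros]:
  fixes f :: "'a::topological_space \<Rightarrow> complex^'n^'m"
  assumes "continuous_on S f"
  shows "continuous_on S (\<lambda>x. ctrans (f x))"
  unfolding ctrans_def by (intro continuous_intros assms)

lemma continuous_on_cmat_scale [continuous_intros]:
  fixes f :: "'a::topological_space \<Rightarrow> complex^'n^'m"
  assumes "continuous_on S f" "continuous_on S c"
  shows "continuous_on S (\<lambda>x. cmat_scale (c x) (f x))"
  unfolding cmat_scale_def by (intro continuous_intros assms)

lemma compact_slice_uniform_neighbourhood:
  fixes f :: "'a::metric_space \<times> 'b::metric_space \<Rightarrow> 'c::topological_space"
  assumes S: "open S" "continuous_on S f" and W: "open W" and K: "compact K"
    and slice: "\<And>y. y \<in> K \<Longrightarrow> (p, y) \<in> S \<and> f (p, y) \<in> W"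
  obtains e where "e > 0" "\<And>x y. dist x p < e \<Longrightarrow> y \<in> K \<Longrightarrow> (x, y) \<in> S \<and> f (x, y) \<in> W"
proof -
  have "open (f -` W \<inter> S)"
    using S W continuous_on_open_vimage by blast
  moreover have "compact ({p} \<times> K)"
    using K by (simp add: compact_Times)
  moreover have "{p} \<times> K \<subseteq> \<Union>{f -` W \<inter> S}"
    using slice by auto
  ultimately obtain e where "e > 0" and "\<And>z. z \<in> {p} \<times> K \<Longrightarrow> \<exists>V\<in>{f -` W \<inter> S}. ball z e \<subseteq> V"
    using Heine_Borel_lemma by blast
  then have e: "\<And>z. z \<in> {p} \<times> K \<Longrightarrow> ball z e \<subseteq> f -` W \<inter> S"
    by blast
  have "(x, y) \<in> S \<and> f (x, y) \<in> W" if "dist x p < e" "y \<in> K" for x y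
  proof -
    have "(x, y) \<in> ball (p, y) e"
      using that(1) by (simp add: dist_Pair_Pair dist_commute)
    then show ?thesis
      using e[of "(p, y)"] that(2) by blast
  qed
  then show ?thesis
    using that \<open>e > 0\<close> by blast
qed

lemma normalized_null_curves_near:
  fixes A0 B0 :: "complex^('r::finite+'s::finite)^'a"
  assumes W: "open W" "A0 \<in> W" and A0: "hprod A0 B0 = mat 1"
  obtains e where "e > 0" "ball A0 e \<subseteq> W"
    "\<And>A B. A \<in> ball A0 e \<Longrightarrow> B \<in> ball A0 e \<Longrightarrow> det (hprod A B0) \<noteq> 0 \<and> det (hprod B B0) \<noteq> 0 \<and>
       null_curve (normalize_rep B0 A) (normalize_rep B0 B) B0 ` ball 0 2 \<subseteq> W"
proof -
  define S where "S = {z::((complex^('r+'s)^'a) \<times> (complex^('r+'s)^'a)) \<times> complex.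
      det (hprod (fst (fst z)) B0) \<noteq> 0} \<inter> {z. det (hprod (snd (fst z)) B0) \<noteq> 0}"
  define f where "f = (\<lambda>z::((complex^('r+'s)^'a) \<times> (complex^('r+'s)^'a)) \<times> complex.
      null_curve (normalize_rep B0 (fst (fst z))) (normalize_rep B0 (snd (fst z))) B0 (snd z))"
  have S_open: "open S"
    unfolding S_def hprod_def by (intro open_Int open_Collect_neq continuous_intros)
  have f_cont: "continuous_on S f"
    unfolding f_def null_curve_def Let_def normalize_rep_def hprod_def
    by (intro continuous_intros) (auto simp: S_def hprod_def)
  have slice: "((A0, A0), \<tau>) \<in> S \<and> f ((A0, A0), \<tau>) \<in> W" for \<tau>
    using W A0 by (simp add: S_def f_def normalize_rep_self null_curve_same)
  obtain e where "e > 0"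
    and e: "\<And>x \<tau>. dist x (A0, A0) < e \<Longrightarrow> \<tau> \<in> cball 0 2 \<Longrightarrow> (x, \<tau>) \<in> S \<and> f (x, \<tau>) \<in> W"
    using compact_slice_uniform_neighbourhood[OF S_open f_cont W(1) compact_cball, where p = "(A0, A0)"] slice
    by blast
  obtain e1 where "e1 > 0" "ball A0 e1 \<subseteq> W"
    using W open_contains_ball by blast
  have "det (hprod A B0) \<noteq> 0 \<and> det (hprod B B0) \<noteq> 0 \<and>
       null_curve (normalize_rep B0 A) (normalize_rep B0 B) B0 ` ball 0 2 \<subseteq> W"
    if "A \<in> ball A0 (min (e/2) e1)" "B \<in> ball A0 (min (e/2) e1)" for A B
  proof -
    have "dist (A, B) (A0, A0) \<le> dist A A0 + dist B A0"
      unfolding dist_Pair_Pair by (rule sqrt_sum_squares_le_sum) auto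
    also have "\<dots> < e"
      using that by (simp add: dist_commute)
    finally have near: "((A, B), \<tau>) \<in> S \<and> f ((A, B), \<tau>) \<in> W" if "\<tau> \<in> cball 0 2" for \<tau>
      using e that by blast
    from near[of 0] have "det (hprod A B0) \<noteq> 0 \<and> det (hprod B B0) \<noteq> 0"
      by (simp add: S_def)
    moreover have "null_curve (normalize_rep B0 A) (normalize_rep B0 B) B0 ` ball 0 2 \<subseteq> W"
      using near by (auto simp: f_def)
    ultimately show ?thesis
      by blast
  qed
  moreover have "ball A0 (min (e/2) e1) \<subseteq> W"
    using \<open>ball A0 e1 \<subseteq> W\<close> by auto
  ultimately show ?thesis
    using that[of "min (e/2) e1"] \<open>e > 0\<close> \<open>e1 > 0\<close> by auto
qed

lemma openin_grass_top:
  "openin (grass_top :: (complex^('r::finite+'s::finite)) set topology) U \<longleftrightarrow>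
     U \<subseteq> Grass \<and> open (reps U :: (complex^('r+'s)^'r) set)"
proof -
  have "reps (S \<inter> T) = (reps S \<inter> reps T :: (complex^('r+'s)^'r) set)"
    "reps (\<Union>K) = (\<Union>(reps ` K) :: (complex^('r+'s)^'r) set)" for S T K
    by (auto simp: reps_def)
  then have "istopology (\<lambda>U. U \<subseteq> (Grass :: (complex^('r+'s)) set set) \<and>
      open (reps U :: (complex^('r+'s)^'r) set))"
    unfolding istopology_def by auto
  then show ?thesis
    unfolding grass_top_def by (simp only: topology_inverse')
qed

lemma rowsp_eq_imp_invertible_factor:
  fixes A C :: "complex^'c^'r"
  assumes "full_rank C" "rowsp C = rowsp A"
  obtains G H :: "complex^'r^'r" where "A = H ** C" "G ** H = mat 1"
proof -
  obtain G where G: "C = G ** A"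
    using rowsp_subset_imp_factor assms(2) by blast
  obtain H where H: "A = H ** C"
    using rowsp_subset_imp_factor assms(2) by (metis order_refl)
  have "(G ** H - mat 1) ** C = 0"
    using G H by (simp add: matrix_diff_rdistrib matrix_mul_assoc)
  then have "G ** H - mat 1 = 0"
    by (rule full_rank_cancel[OF assms(1)])
  then have "G ** H = mat 1"
    by simp
  then show ?thesis
    using that H by blast
qed

lemma openin_rowsp_image:
  fixes V :: "(complex^('r::finite+'s::finite)^'r) set"
  assumes V: "open V" and full: "\<And>A. A \<in> V \<Longrightarrow> full_rank A"
  shows "openin grass_top (rowsp ` V)"
  unfolding openin_grass_top
proof
  show "rowsp ` V \<subseteq> Grass"
    using full by (auto simp: Grass_def)
  show "open (reps (rowsp ` V) :: (complex^('r+'s)^'r) set)"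
    unfolding open_subopen[of "reps (rowsp ` V)"]
  proof
    fix C :: "complex^('r+'s)^'r"
    assume "C \<in> reps (rowsp ` V)"
    then obtain A where C: "full_rank C" "A \<in> V" "rowsp C = rowsp A"
      by (auto simp: reps_def)
    then obtain G H :: "complex^'r^'r" where H: "A = H ** C" and GH: "G ** H = mat 1"
      by (metis rowsp_eq_imp_invertible_factor)
    define T where "T = (\<lambda>C'. H ** C') -` V"
    have "continuous_on UNIV (\<lambda>C'::complex^('r+'s)^'r. H ** C')"
      by (intro continuous_intros)
    then have "open T"
      unfolding T_def using V by (metis continuous_on_open_vimage inf_top.right_neutral open_UNIV)
    moreover have "C \<in> T"
      using H C(2) by (simp add: T_def)
    moreover have "C' \<in> reps (rowsp ` V)" if "C' \<in> T" for C'
    proof -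
      have HC': "H ** C' \<in> V"
        using that by (simp add: T_def)
      have C': "C' = G ** (H ** C')"
        by (simp add: matrix_mul_assoc GH)
      then have "rowsp C' = rowsp (H ** C')"
        using rowsp_matrix_mult_subset by (metis subset_antisym)
      moreover have "full_rank C'"
        using full_rank_matrix_mult[OF full[OF HC'] GH] C' by metis
      ultimately show ?thesis
        using HC' by (auto simp: reps_def)
    qed
    ultimately show "\<exists>T. open T \<and> C \<in> T \<and> T \<subseteq> reps (rowsp ` V)"
      by blast
  qed
qed

lemma connectedin_rowsp_image:
  fixes V :: "(complex^('r::finite+'s::finite)^'r) set"
  assumes V: "open V" "connected V" and full: "\<And>A. A \<in> V \<Longrightarrow> full_rank A"
  shows "connectedin grass_top (rowsp ` V)"
proof -
  have "continuous_map (top_of_set V) (grass_top :: (complex^('r+'s)) set topology) rowsp"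
    unfolding continuous_map_def
  proof safe
    fix A
    assume "A \<in> topspace (top_of_set V)"
    then show "rowsp A \<in> topspace grass_top"
      using openin_subset[OF openin_rowsp_image[OF V(1) full]] by auto
  next
    fix P
    assume "openin (grass_top :: (complex^('r+'s)) set topology) P"
    then have "open (reps P :: (complex^('r+'s)^'r) set)"
      using openin_grass_top by blast
    moreover have "{x \<in> topspace (top_of_set V). rowsp x \<in> P} = V \<inter> reps P"
      using full by (auto simp: reps_def)
    ultimately show "openin (top_of_set V) {x \<in> topspace (top_of_set V). rowsp x \<in> P}"
      by (simp add: openin_open_Int)
  qed
  moreover have "connectedin (top_of_set V) V"
    using V(2) by (simp add: connectedin_subtopology connectedin_iff_connected)
  ultimately show ?thesis
    using connectedin_continuous_map_image by blast
qed

lemma grass_holomorphic_subset: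
  fixes F :: "(complex^('r::finite + 's::finite)) set \<Rightarrow> (complex^('r2::finite + 's2::finite)) set"
  assumes hol: "grass_holomorphic F U" and sub: "U' \<subseteq> U" and U': "openin grass_top U'"
  shows "grass_holomorphic F U'"
proof -
  have "open (reps U' :: (complex^('r+'s)^'r) set)"
    using U' openin_grass_top by blast
  have "\<exists>W (\<Phi> :: complex^('r+'s)^'r \<Rightarrow> complex^('r2+'s2)^'r2). A \<in> W \<and> W \<subseteq> reps U' \<and>
      mat_holomorphic_on \<Phi> W \<and> (\<forall>B\<in>W. full_rank (\<Phi> B) \<and> rowsp (\<Phi> B) = F (rowsp B))"
    if A: "A \<in> reps U'" for A
  proof -
    have "A \<in> reps U"
      using A sub unfolding reps_def by blast
    then obtain W and \<Phi> :: "complex^('r+'s)^'r \<Rightarrow> complex^('r2+'s2)^'r2"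
      where "A \<in> W" "mat_holomorphic_on \<Phi> W" "\<forall>B\<in>W. full_rank (\<Phi> B) \<and> rowsp (\<Phi> B) = F (rowsp B)"
      using hol unfolding grass_holomorphic_def by meson
    moreover have "mat_holomorphic_on \<Phi> (W \<inter> reps U')"
      using calculation(2) \<open>open (reps U')\<close> unfolding mat_holomorphic_on_def by blast
    ultimately show ?thesis
      using A by (intro exI[of _ "W \<inter> reps U'"] exI[of _ \<Phi>]) auto
  qed
  then show ?thesis
    using hol sub U' unfolding grass_holomorphic_def by blast
qed

section \<open>Orthogonality of null-preserving holomorphic maps\<close>

lemma lift_hprod_null:
  fixes \<Phi> :: "complex^('r::finite+'s::finite)^'r \<Rightarrow> complex^('r2::finite+'s2::finite)^'r2"
  assumes null_preserving: "\<forall>p\<in>U. gnull p \<longrightarrow> gnull (F p)"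
    and W: "W \<subseteq> reps U" and lift: "\<forall>B\<in>W. full_rank (\<Phi> B) \<and> rowsp (\<Phi> B) = F (rowsp B)"
    and X: "X \<in> W" "hprod X X = 0"
  shows "hprod (\<Phi> X) (\<Phi> X) = 0"
proof -
  have "full_rank X" "rowsp X \<in> U"
    using X(1) W by (auto simp: reps_def)
  then have "gnull (F (rowsp X))"
    using null_preserving X(2) gnull_rowsp_iff by blast
  then show ?thesis
    using lift X(1) gnull_rowsp_iff by metis
qed

lemma lift_gperp:
  fixes \<Phi> :: "complex^('r::finite+'s::finite)^'r \<Rightarrow> complex^('r2::finite+'s2::finite)^'r2"
  assumes hol: "mat_holomorphic_on \<Phi> W"
    and lift: "\<forall>B\<in>W. full_rank (\<Phi> B) \<and> rowsp (\<Phi> B) = F (rowsp B)"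
    and null_preserving: "\<And>X. X \<in> W \<Longrightarrow> hprod X X = 0 \<Longrightarrow> hprod (\<Phi> X) (\<Phi> X) = 0"
    and B0: "hprod B0 B0 = 0"
    and A: "det (hprod A B0) \<noteq> 0" and B: "det (hprod B B0) \<noteq> 0"
    and curve_in: "null_curve (normalize_rep B0 A) (normalize_rep B0 B) B0 ` ball 0 2 \<subseteq> W"
    and AB: "hprod A B = 0"
  shows "gperp (F (rowsp A)) (F (rowsp B))"
proof -
  let ?A = "normalize_rep B0 A" and ?B = "normalize_rep B0 B"
  have "hprod ?A ?B = 0"
    by (simp add: normalize_rep_def AB)
  then have "hprod (\<Phi> ?A) (\<Phi> ?B) = 0"
    using hprod_holomorphic_image_zero[OF hol null_preserving hprod_normalize_rep[OF A]
        hprod_normalize_rep[OF B] B0 _ curve_in] by blast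
  moreover have "\<i> \<in> ball (0::complex) 2" "-\<i> \<in> ball (0::complex) 2"
    by simp_all
  then have "?A \<in> W" "?B \<in> W"
    using curve_in null_curve_at_i null_curve_at_minus_i by (metis image_subset_iff)+
  ultimately show ?thesis
    using lift gperp_rowsp_iff rowsp_normalize_rep[OF A] rowsp_normalize_rep[OF B] by metis
qed

lemma lift_gperp_near_null:
  fixes \<Phi> :: "complex^('r::finite+'s::finite)^'r \<Rightarrow> complex^('r2::finite+'s2::finite)^'r2"
  assumes hol: "mat_holomorphic_on \<Phi> W" and W: "W \<subseteq> reps U"
    and lift: "\<forall>B\<in>W. full_rank (\<Phi> B) \<and> rowsp (\<Phi> B) = F (rowsp B)"
    and null_preserving: "\<forall>p\<in>U. gnull p \<longrightarrow> gnull (F p)"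
    and A0: "A0 \<in> W" "hprod A0 A0 = 0"
  obtains e where "e > 0" "ball A0 e \<subseteq> W"
    "\<And>A B. A \<in> ball A0 e \<Longrightarrow> B \<in> ball A0 e \<Longrightarrow> hprod A B = 0 \<Longrightarrow> gperp (F (rowsp A)) (F (rowsp B))"
proof -
  have "full_rank A0"
    using A0(1) W by (auto simp: reps_def)
  then obtain B0 where B0: "hprod A0 B0 = mat 1" "hprod B0 B0 = 0"
    using null_dual_exists A0(2) by blast
  have "open W"
    using hol unfolding mat_holomorphic_on_def by blast
  then obtain e where "e > 0" "ball A0 e \<subseteq> W"
    and near: "\<And>A B. A \<in> ball A0 e \<Longrightarrow> B \<in> ball A0 e \<Longrightarrow> det (hprod A B0) \<noteq> 0 \<and>
       det (hprod B B0) \<noteq> 0 \<and> null_curve (normalize_rep B0 A) (normalize_rep B0 B) B0 ` ball 0 2 \<subseteq> W"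
    using normalized_null_curves_near[OF _ A0(1) B0(1)] by blast
  show ?thesis
  proof (rule that[OF \<open>e > 0\<close> \<open>ball A0 e \<subseteq> W\<close>])
    fix A B
    assume "A \<in> ball A0 e" "B \<in> ball A0 e" "hprod A B = 0"
    then show "gperp (F (rowsp A)) (F (rowsp B))"
      using near[of A B] lift_gperp[OF hol lift lift_hprod_null[OF null_preserving W lift] B0(2)]
      by blast
  qed
qed

theorem proposition2p5:
  fixes F :: "(complex^('r::finite + 's::finite)) set \<Rightarrow> (complex^('r2::finite + 's2::finite)) set"
    and U :: "(complex^('r+'s)) set set"
  assumes "CARD('r) \<le> CARD('s)" and "CARD('r2) \<le> CARD('s2)"
    and "grass_holomorphic F U"
    and "\<exists>p\<in>U. gnull p"
    and "\<forall>p\<in>U. gnull p \<longrightarrow> gnull (F p)"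
  shows "\<exists>U'. U' \<subseteq> U \<and> openin grass_top U' \<and> orthogonal_map F U'"
proof -
  obtain A0 :: "complex^('r+'s)^'r" where A0: "full_rank A0" "rowsp A0 \<in> U" "gnull (rowsp A0)"
    using assms(4) unfolding gnull_def gperp_def by blast
  then obtain W and \<Phi> :: "complex^('r+'s)^'r \<Rightarrow> complex^('r2+'s2)^'r2"
    where W: "A0 \<in> W" "W \<subseteq> reps U" "mat_holomorphic_on \<Phi> W"
      and lift: "\<forall>B\<in>W. full_rank (\<Phi> B) \<and> rowsp (\<Phi> B) = F (rowsp B)"
    using assms(3) unfolding grass_holomorphic_def reps_def by blast
  moreover have "hprod A0 A0 = 0"
    using A0 gnull_rowsp_iff by blast
  ultimately obtain e where "e > 0" and ball: "ball A0 e \<subseteq> W"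
    and perp: "\<And>A B. A \<in> ball A0 e \<Longrightarrow> B \<in> ball A0 e \<Longrightarrow> hprod A B = 0 \<Longrightarrow>
      gperp (F (rowsp A)) (F (rowsp B))"
    using lift_gperp_near_null[OF W(3,2) lift assms(5)] by blast
  have full: "\<And>A. A \<in> ball A0 e \<Longrightarrow> full_rank A" and sub: "rowsp ` ball A0 e \<subseteq> U"
    using ball W(2) by (auto simp: reps_def)
  have U': "openin grass_top (rowsp ` ball A0 e)"
    using openin_rowsp_image[OF open_ball full] .
  have "gperp (F p) (F q)" if pq: "p \<in> rowsp ` ball A0 e" "q \<in> rowsp ` ball A0 e" "gperp p q" for p q
  proof -
    obtain A B where "A \<in> ball A0 e" "B \<in> ball A0 e" "p = rowsp A" "q = rowsp B"
      using pq(1,2) by blast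
    then show ?thesis
      using perp full gperp_rowsp_iff pq(3) by blast
  qed
  moreover have "rowsp A0 \<in> rowsp ` ball A0 e"
    using \<open>e > 0\<close> by simp
  ultimately have "orthogonal_map F (rowsp ` ball A0 e)"
    unfolding orthogonal_map_def using grass_holomorphic_subset[OF assms(3) sub U'] A0(3)
      connectedin_rowsp_image[OF open_ball connected_ball full] by blast
  then show ?thesis
    using sub U' by blast
qed
end
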